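(* For strictly positive formulas $A,B$, $A\vdash_{\mathbf{RC\omega}}B$ iff $\mathrm{RC}\omega_S[A]\Vdash B$ (truth at the root), where $S=\ell(\{A,B\})$.
   Context: Strictly positive formulas: $A::= p\mid \top\mid (A\land B)\mid \alpha A$, $\alpha\le\omega$; $\ell(X)$ is the set of modalities occurring in formulas of $X$. $\mathbf{RC\omega}$: $A\vdash A$; $A\vdash\top$; cut; $A\land B\vdash A$; $A\land B\vdash B$; from $A\vdash B$, $A\vdash C$ infer $A\vdash B\land C$; from $A\vdash B$ infer $\alpha A\vdash\alpha B$; $\alpha\alpha A\vdash\alpha A$; $\alpha\beta A\vdash\beta A$, $\beta\alpha A\vdash\beta A$ for $\alpha\ge\beta$; $\alpha A\land\beta B\vdash\alpha(A\land\beta B)$ for $\alpha>\beta$; $\alpha A\vdash\beta A$ for $\alpha>\beta$; $\omega A\vdash A$. Kripke models of signature $S$: $W$, relations $(R_\alpha)_{\alpha\in S}$, valuation $v$; $x\Vdash\alpha A$ iff $\exists y(xR_\alpha y\wedge y\Vdash A)$. RC$_S$-frame: for $\alpha,\beta\in S$, $R_\alpha R_\beta\subseteq R_{\min(\alpha,\beta)}$; for $\alpha>\beta$, $xR_\alpha y\wedge xR_\beta z\Rightarrow yR_\beta z$; and $R_\alpha\subseteq R_\beta$ for $\beta<\alpha$. The canonical tree $T[A]$: for a variable or $\top$, one node with empty relations where only that variable is true; $T[B\land C]$: disjoint union of $T[B],T[C]$ with roots identified, a variable true at the root iff true at either root; $T[\alpha B]$: $T[B]$ plus a new root $r$ (all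 variables false) with $rR_\alpha$(root of $T[B]$). $\mathrm{RC}_S[A]$ ($S\supseteq\ell(A)$) is $T[A]$ with its relations replaced by the least relations containing them that form an RC$_S$-frame. $\mathrm{RC}\omega_S[A]$ has the frame of $\mathrm{RC}_S[A]$ and valuation $v'$ with $v'(x,p)=1$ iff $v(x,p)=1$ or there is $y$ with $xR_\omega y$ and $v(y,p)=1$, where $v$ is the valuation of $\mathrm{RC}_S[A]$. *)

theory Defs
  imports Main "HOL-Library.Extended_Nat"
begin

text \<open>Modalities are ordinals \<open>\<alpha> \<le> \<omega>\<close>, represented by \<open>enat\<close>,
  where \<open>\<infinity>\<close> plays the role of \<open>\<omega>\<close>.\<close>

datatype 'a fm = Var 'a | Top | And "'a fm" "'a fm" | Dia enat "'a fm"

fun mods :: "'a fm \<Rightarrow> enat set" where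
  "mods (Var p) = {}"
| "mods Top = {}"
| "mods (And A B) = mods A \<union> mods B"
| "mods (Dia a A) = insert a (mods A)"

inductive deriv :: "'a fm \<Rightarrow> 'a fm \<Rightarrow> bool" where
  ax: "deriv A A"
| top: "deriv A Top"
| cut: "deriv A B \<Longrightarrow> deriv B C \<Longrightarrow> deriv A C"
| andE1: "deriv (And A B) A"
| andE2: "deriv (And A B) B"
| andI: "deriv A B \<Longrightarrow> deriv A C \<Longrightarrow> deriv A (And B C)"
| nec: "deriv A B \<Longrightarrow> deriv (Dia a A) (Dia a B)"
| trans4: "deriv (Dia a (Dia a A)) (Dia a A)"
| mono1: "a \<ge> b \<Longrightarrow> deriv (Dia a (Dia b A)) (Dia b A)"
| mono2: "a \<ge> b \<Longrightarrow> deriv (Dia b (Dia a A)) (Dia b A)"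
| pull: "a > b \<Longrightarrow> deriv (And (Dia a A) (Dia b B)) (Dia a (And A (Dia b B)))"
| weak: "a > b \<Longrightarrow> deriv (Dia a A) (Dia b A)"
| omega: "deriv (Dia \<infinity> A) A"

record ('w, 'a) kmodel =
  worlds :: "'w set"
  rel :: "enat \<Rightarrow> ('w \<times> 'w) set"
  val :: "'w \<Rightarrow> 'a \<Rightarrow> bool"

fun sat :: "('w, 'a) kmodel \<Rightarrow> 'w \<Rightarrow> 'a fm \<Rightarrow> bool" where
  "sat M x (Var p) = val M x p"
| "sat M x Top = True"
| "sat M x (And A B) = (sat M x A \<and> sat M x B)"
| "sat M x (Dia a A) = (\<exists>y\<in>worlds M. (x, y) \<in> rel M a \<and> sat M y A)"

definition rc_frame :: "enat set \<Rightarrow> (enat \<Rightarrow> ('w \<times> 'w) set) \<Rightarrow> bool" where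
  "rc_frame S R \<longleftrightarrow>
     (\<forall>a\<in>S. \<forall>b\<in>S. R a O R b \<subseteq> R (min a b)) \<and>
     (\<forall>a\<in>S. \<forall>b\<in>S. a > b \<longrightarrow> (\<forall>x y z. (x, y) \<in> R a \<and> (x, z) \<in> R b \<longrightarrow> (y, z) \<in> R b)) \<and>
     (\<forall>a\<in>S. \<forall>b\<in>S. b < a \<longrightarrow> R a \<subseteq> R b)"

definition rc_closure :: "enat set \<Rightarrow> (enat \<Rightarrow> ('w \<times> 'w) set) \<Rightarrow> enat \<Rightarrow> ('w \<times> 'w) set" where
  "rc_closure S R a = {(x, y). \<forall>R'. (\<forall>b\<in>S. R b \<subseteq> R' b) \<and> rc_frame S R' \<longrightarrow> (x, y) \<in> R' a}"

text \<open>Canonical tree T[A]; nodes are lists of naturals, the root is []. In a conjunction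
  the non-root nodes of the two conjunct trees are tagged 0 and 1, the roots being identified.\<close>
definition tag :: "nat \<Rightarrow> nat list \<Rightarrow> nat list" where
  "tag i p = (if p = [] then [] else i # p)"

fun tnodes :: "'a fm \<Rightarrow> nat list set" where
  "tnodes (Var p) = {[]}"
| "tnodes Top = {[]}"
| "tnodes (And B C) = tag 0 ` tnodes B \<union> tag 1 ` tnodes C"
| "tnodes (Dia a B) = insert [] ((#) 0 ` tnodes B)"

fun trel :: "'a fm \<Rightarrow> enat \<Rightarrow> (nat list \<times> nat list) set" where
  "trel (Var p) b = {}"
| "trel Top b = {}"
| "trel (And B C) b = map_prod (tag 0) (tag 0) ` trel B b \<union> map_prod (tag 1) (tag 1) ` trel C b"
| "trel (Dia a B) b = (if b = a then {([], [0])} else {}) \<union> map_prod ((#) 0) ((#) 0) ` trel B b"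

fun tval :: "'a fm \<Rightarrow> nat list \<Rightarrow> 'a \<Rightarrow> bool" where
  "tval (Var q) x p = (x = [] \<and> p = q)"
| "tval Top x p = False"
| "tval (And B C) x p = ((\<exists>y\<in>tnodes B. x = tag 0 y \<and> tval B y p) \<or> (\<exists>y\<in>tnodes C. x = tag 1 y \<and> tval C y p))"
| "tval (Dia a B) x p = (\<exists>y\<in>tnodes B. x = 0 # y \<and> tval B y p)"

definition tree :: "'a fm \<Rightarrow> (nat list, 'a) kmodel" where
  "tree A = \<lparr>worlds = tnodes A, rel = trel A, val = tval A\<rparr>"

definition RC_model :: "enat set \<Rightarrow> 'a fm \<Rightarrow> (nat list, 'a) kmodel" where
  "RC_model S A = \<lparr>worlds = tnodes A, rel = rc_closure S (trel A), val = tval A\<rparr>"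

text \<open>RC\<omega>_S[A]: same frame, valuation closed backwards along R_\<omega>
  (R_\<omega> is empty when \<omega> \<notin> S).\<close>
definition RCw_model :: "enat set \<Rightarrow> 'a fm \<Rightarrow> (nat list, 'a) kmodel" where
  "RCw_model S A = \<lparr>worlds = tnodes A, rel = rc_closure S (trel A),
     val = (\<lambda>x p. tval A x p \<or> (\<exists>y\<in>tnodes A. (x, y) \<in> rc_closure S (trel A) \<infinity> \<and> tval A y p))\<rparr>"

end

theory Submission
  imports Defs
begin

text \<open>Soundness: on the canonical tree \<open>T[A]\<close> the RC-closure of the relations admits an
  explicit description that is an RC-frame for all modalities at once and agrees with
  \<open>RC\<omega>\<^sub>S[A]\<close> on the modalities in \<open>S\<close>. Together with the \<open>R\<^sub>\<omega>\<close>-closed valuation this is a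
  model of RC\<omega>, in which \<open>A\<close> holds at the root; so every consequence \<open>B\<close> of \<open>A\<close> holds
  there as well. The detour is necessary because a derivation may pass through formulas with
  modalities outside \<open>S\<close>.

  Completeness: \<open>T[A]\<close> maps homomorphically into the canonical model of RC\<omega>-theories,
  sending the root to the theory of consequences of \<open>A\<close>. The canonical model is an RC-frame
  with \<open>R\<^sub>\<omega>\<close>-persistent valuation, so the closure relations and the valuation of
  \<open>RC\<omega>\<^sub>S[A]\<close> map into it as well, truth of \<open>B\<close> at the root transfers, and the truth lemma
  turns it into derivability of \<open>B\<close> from \<open>A\<close>.\<close>

section \<open>Frames and soundness\<close>

lemma rc_frame_comp:
  "rc_frame S R \<Longrightarrow> a \<in> S \<Longrightarrow> b \<in> S \<Longrightarrow> (x, y) \<in> R a \<Longrightarrow> (y, z) \<in> R b \<Longrightarrow> (x, z) \<in> R (min a b)"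
  unfolding rc_frame_def by blast

lemma rc_frame_eucl:
  "rc_frame S R \<Longrightarrow> a \<in> S \<Longrightarrow> b \<in> S \<Longrightarrow> b < a \<Longrightarrow> (x, y) \<in> R a \<Longrightarrow> (x, z) \<in> R b \<Longrightarrow> (y, z) \<in> R b"
  unfolding rc_frame_def by blast

lemma rc_frame_incl:
  "rc_frame S R \<Longrightarrow> a \<in> S \<Longrightarrow> b \<in> S \<Longrightarrow> b < a \<Longrightarrow> (x, y) \<in> R a \<Longrightarrow> (x, y) \<in> R b"
  unfolding rc_frame_def by blast

lemma rc_frame_subset: "rc_frame T R \<Longrightarrow> S \<subseteq> T \<Longrightarrow> rc_frame S R"
  unfolding rc_frame_def by blast

lemma rc_frame_preimage:
  assumes "rc_frame S R"
  shows "rc_frame S (\<lambda>c. {(u, v). (f u, f v) \<in> R c})"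
  using assms unfolding rc_frame_def by blast

lemma rc_closure_least:
  "rc_frame S R' \<Longrightarrow> \<forall>c\<in>S. R c \<subseteq> R' c \<Longrightarrow> rc_closure S R b \<subseteq> R' b"
  unfolding rc_closure_def by blast

lemma rc_closure_hom:
  assumes "rc_frame S R'" and "\<And>c x y. c \<in> S \<Longrightarrow> (x, y) \<in> R c \<Longrightarrow> (f x, f y) \<in> R' c"
    and "(x, y) \<in> rc_closure S R b"
  shows "(f x, f y) \<in> R' b"
  using rc_closure_least[OF rc_frame_preimage[OF assms(1), of f], of R b] assms(2,3) by blast

definition rcw_model :: "('w, 'a) kmodel \<Rightarrow> bool" where
  "rcw_model M \<longleftrightarrow> rc_frame UNIV (rel M) \<and>
     (\<forall>x y p. (x, y) \<in> rel M \<infinity> \<longrightarrow> y \<in> worlds M \<longrightarrow> val M y p \<longrightarrow> val M x p)"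

lemma rcw_model_frame: "rcw_model M \<Longrightarrow> rc_frame UNIV (rel M)"
  unfolding rcw_model_def by blast

lemma sat_Dia_Dia:
  assumes "rcw_model M" and "sat M x (Dia a (Dia b A))"
  shows "sat M x (Dia (min a b) A)"
  using assms rc_frame_comp[OF rcw_model_frame[OF assms(1)], of a b x] by auto

lemma sat_persistent_omega:
  assumes "rcw_model M"
  shows "(x, y) \<in> rel M \<infinity> \<Longrightarrow> y \<in> worlds M \<Longrightarrow> sat M y A \<Longrightarrow> sat M x A"
proof (induction A arbitrary: x y)
  case (Var p)
  then show ?case using assms unfolding rcw_model_def by auto
next
  case (Dia c A)
  then obtain z where "z \<in> worlds M" "(y, z) \<in> rel M c" "sat M z A" by auto
  moreover have "(x, z) \<in> rel M c"
    using rc_frame_comp[OF rcw_model_frame[OF assms], of \<infinity> c x y z] Dia.prems calculation by simp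
  ultimately show ?case by auto
qed auto

lemma deriv_sound:
  assumes "rcw_model M"
  shows "deriv A B \<Longrightarrow> sat M x A \<Longrightarrow> sat M x B"
proof (induction arbitrary: x rule: deriv.induct)
  case (trans4 a A)
  then show ?case using sat_Dia_Dia[OF assms, of x a a] by simp
next
  case (mono1 a b A)
  then show ?case using sat_Dia_Dia[OF assms, of x a b] by (simp add: min_absorb2)
next
  case (mono2 a b A)
  then show ?case using sat_Dia_Dia[OF assms, of x b a] by (simp add: min_absorb1)
next
  case (pull a b A B)
  then show ?case using rc_frame_eucl[OF rcw_model_frame[OF assms], of a b x] by auto
next
  case (weak a b A)
  then show ?case using rc_frame_incl[OF rcw_model_frame[OF assms], of a b x] by auto
next
  case (omega A)
  then show ?case using sat_persistent_omega[OF assms] by auto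
qed auto

section \<open>The canonical model\<close>

lemmas deriv_trans [trans] = deriv.cut

lemma deriv_And_assoc: "deriv (And (And \<phi> \<psi>) \<chi>) (And \<phi> (And \<psi> \<chi>))"
  by (meson deriv.andE1 deriv.andE2 deriv.andI deriv.cut)

lemma deriv_Dia_Dia: "deriv (Dia a (Dia b \<phi>)) (Dia (min a b) \<phi>)"
proof (cases a b rule: linorder_cases)
  case less
  then have "deriv (Dia a (Dia b \<phi>)) (Dia a (Dia a \<phi>))"
    by (intro deriv.nec deriv.weak)
  also have "deriv \<dots> (Dia a \<phi>)"
    by (rule deriv.trans4)
  finally show ?thesis
    using less by (simp add: min_absorb1)
next
  case equal
  then show ?thesis by (simp add: deriv.trans4)
next
  case greater
  then show ?thesis using deriv.mono1[of b a \<phi>] by (simp add: min_absorb2)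
qed

definition rc_theory :: "'a fm set \<Rightarrow> bool" where
  "rc_theory X \<longleftrightarrow> Top \<in> X \<and> (\<forall>\<phi> \<psi>. \<phi> \<in> X \<longrightarrow> deriv \<phi> \<psi> \<longrightarrow> \<psi> \<in> X)
     \<and> (\<forall>\<phi> \<psi>. \<phi> \<in> X \<longrightarrow> \<psi> \<in> X \<longrightarrow> And \<phi> \<psi> \<in> X)"

lemma rc_theory_Top: "rc_theory X \<Longrightarrow> Top \<in> X"
  unfolding rc_theory_def by blast

lemma rc_theory_deriv: "rc_theory X \<Longrightarrow> \<phi> \<in> X \<Longrightarrow> deriv \<phi> \<psi> \<Longrightarrow> \<psi> \<in> X"
  unfolding rc_theory_def by blast

lemma rc_theory_And: "rc_theory X \<Longrightarrow> \<phi> \<in> X \<Longrightarrow> \<psi> \<in> X \<Longrightarrow> And \<phi> \<psi> \<in> X"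
  unfolding rc_theory_def by blast

lemma rc_theory_consequences: "rc_theory {\<psi>. deriv \<phi> \<psi>}"
  unfolding rc_theory_def by (auto intro: deriv.intros)

text \<open>The second condition on \<open>R\<^sub>\<alpha>\<close> is what makes the canonical frame Euclidean in the sense
  of \<open>rc_frame\<close>.\<close>
definition canonical_model :: "('a fm set, 'a) kmodel" where
  "canonical_model = \<lparr>worlds = {X. rc_theory X},
     rel = (\<lambda>a. {(X, Y). rc_theory X \<and> rc_theory Y \<and> (\<forall>\<phi>\<in>Y. Dia a \<phi> \<in> X) \<and>
                 (\<forall>b \<phi>. b < a \<longrightarrow> Dia b \<phi> \<in> X \<longrightarrow> Dia b \<phi> \<in> Y)}),
     val = (\<lambda>X p. Var p \<in> X)\<rparr>"

lemma rcw_model_canonical: "rcw_model canonical_model"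
  unfolding rcw_model_def rc_frame_def
proof (intro conjI ballI allI impI subsetI)
  fix a b :: enat and p
  assume "p \<in> rel canonical_model a O rel canonical_model b"
  then obtain X Y Z where p: "p = (X, Z)" and XY: "(X, Y) \<in> rel canonical_model a"
    and YZ: "(Y, Z) \<in> rel canonical_model b" by auto
  have "Dia (min a b) \<phi> \<in> X" if "\<phi> \<in> Z" for \<phi>
    using that XY YZ rc_theory_deriv[OF _ _ deriv_Dia_Dia] unfolding canonical_model_def by fastforce
  then show "p \<in> rel canonical_model (min a b)"
    using p XY YZ unfolding canonical_model_def by auto
next
  fix a b :: enat and X Y Z
  assume ab: "b < a" and XYZ: "(X, Y) \<in> rel canonical_model a \<and> (X, Z) \<in> rel canonical_model b"
  have "Dia c \<phi> \<in> Z" if "c < b" "Dia c \<phi> \<in> Y" for c \<phi>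
  proof -
    have "Dia a (Dia c \<phi>) \<in> X" using that XYZ unfolding canonical_model_def by auto
    then have "Dia c \<phi> \<in> X"
      using XYZ that(1) ab rc_theory_deriv[OF _ _ deriv.mono1[of c a \<phi>]]
      unfolding canonical_model_def by auto
    then show ?thesis using XYZ that(1) unfolding canonical_model_def by auto
  qed
  then show "(Y, Z) \<in> rel canonical_model b"
    using XYZ ab unfolding canonical_model_def by auto
next
  fix a b :: enat and p
  assume "b < a" and "p \<in> rel canonical_model a"
  then show "p \<in> rel canonical_model b"
    using rc_theory_deriv[OF _ _ deriv.weak] unfolding canonical_model_def by fastforce
next
  fix X Y p
  assume "(X, Y) \<in> rel canonical_model \<infinity>" "val canonical_model Y p"
  then show "val canonical_model X p"
    using rc_theory_deriv[OF _ _ deriv.omega, of X "Var p"] unfolding canonical_model_def by auto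
qed

inductive pullable :: "enat \<Rightarrow> 'a fm set \<Rightarrow> 'a fm \<Rightarrow> bool" for a X where
  "pullable a X Top"
| "b < a \<Longrightarrow> Dia b \<psi> \<in> X \<Longrightarrow> pullable a X (Dia b \<psi>)"
| "pullable a X \<theta>1 \<Longrightarrow> pullable a X \<theta>2 \<Longrightarrow> pullable a X (And \<theta>1 \<theta>2)"

lemma pullable_mem: "pullable a X \<theta> \<Longrightarrow> rc_theory X \<Longrightarrow> \<theta> \<in> X"
  by (induction rule: pullable.induct) (auto intro: rc_theory_Top rc_theory_And)

lemma deriv_pull_pullable: "pullable a X \<theta> \<Longrightarrow> deriv (And (Dia a \<phi>) \<theta>) (Dia a (And \<phi> \<theta>))"
proof (induction \<theta> arbitrary: \<phi> rule: pullable.induct)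
  case 1
  show ?case by (meson deriv.andE1 deriv.andI deriv.ax deriv.cut deriv.nec deriv.top)
next
  case (2 b \<psi>)
  then show ?case by (simp add: deriv.pull)
next
  case (3 \<theta>1 \<theta>2)
  have "deriv (And (Dia a \<phi>) (And \<theta>1 \<theta>2)) (And (Dia a (And \<phi> \<theta>1)) \<theta>2)"
    by (meson "3.IH"(1) deriv.andE1 deriv.andE2 deriv.andI deriv.cut)
  also have "deriv \<dots> (Dia a (And (And \<phi> \<theta>1) \<theta>2))"
    by (rule "3.IH"(2))
  also have "deriv \<dots> (Dia a (And \<phi> (And \<theta>1 \<theta>2)))"
    by (intro deriv.nec deriv_And_assoc)
  finally show ?case .
qed

text \<open>The witness is generated by \<open>\<phi>\<close> together with all \<open>\<beta>\<psi> \<in> X\<close> for \<open>\<beta> < \<alpha>\<close>; axiom \<open>pull\<close>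
  keeps \<open>\<alpha>\<close> of each of its members inside \<open>X\<close>.\<close>
lemma canonical_Dia_witness:
  assumes X: "rc_theory X" and aX: "Dia a \<phi> \<in> X"
  obtains Y where "rc_theory Y" "\<phi> \<in> Y" "(X, Y) \<in> rel canonical_model a"
proof
  define Y where "Y = {\<chi>. \<exists>\<theta>. pullable a X \<theta> \<and> deriv (And \<phi> \<theta>) \<chi>}"
  have memY: "pullable a X \<theta> \<Longrightarrow> deriv (And \<phi> \<theta>) \<chi> \<Longrightarrow> \<chi> \<in> Y" for \<theta> \<chi>
    unfolding Y_def by auto
  show "rc_theory Y"
    unfolding rc_theory_def
  proof (intro conjI allI impI)
    show "Top \<in> Y" by (rule memY[OF pullable.intros(1) deriv.top])
  next
    fix \<chi> \<psi> assume "\<chi> \<in> Y" "deriv \<chi> \<psi>"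
    then show "\<psi> \<in> Y" unfolding Y_def using deriv.cut by blast
  next
    fix \<chi> \<psi> assume "\<chi> \<in> Y" "\<psi> \<in> Y"
    then obtain \<theta>1 \<theta>2 where "pullable a X \<theta>1" "deriv (And \<phi> \<theta>1) \<chi>"
      and "pullable a X \<theta>2" "deriv (And \<phi> \<theta>2) \<psi>"
      unfolding Y_def by auto
    then show "And \<chi> \<psi> \<in> Y"
      by (meson memY pullable.intros(3) deriv.andE1 deriv.andE2 deriv.andI deriv.cut)
  qed
  show "\<phi> \<in> Y" by (rule memY[OF pullable.intros(1) deriv.andE1])
  have "Dia a \<chi> \<in> X" if "\<chi> \<in> Y" for \<chi>
  proof -
    obtain \<theta> where \<theta>: "pullable a X \<theta>" "deriv (And \<phi> \<theta>) \<chi>"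
      using \<open>\<chi> \<in> Y\<close> unfolding Y_def by auto
    have "And (Dia a \<phi>) \<theta> \<in> X"
      by (rule rc_theory_And[OF X aX pullable_mem[OF \<theta>(1) X]])
    then have "Dia a (And \<phi> \<theta>) \<in> X"
      by (rule rc_theory_deriv[OF X _ deriv_pull_pullable[OF \<theta>(1)]])
    then show ?thesis by (rule rc_theory_deriv[OF X _ deriv.nec[OF \<theta>(2)]])
  qed
  moreover have "Dia b \<psi> \<in> Y" if "b < a" "Dia b \<psi> \<in> X" for b \<psi>
    by (rule memY[OF pullable.intros(2)[OF that] deriv.andE2])
  ultimately show "(X, Y) \<in> rel canonical_model a"
    using X \<open>rc_theory Y\<close> unfolding canonical_model_def by auto
qed

lemma canonical_sat_iff: "rc_theory X \<Longrightarrow> sat canonical_model X \<phi> \<longleftrightarrow> \<phi> \<in> X"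
proof (induction \<phi> arbitrary: X)
  case (Var p)
  then show ?case by (simp add: canonical_model_def)
next
  case Top
  then show ?case by (simp add: rc_theory_Top)
next
  case (And \<phi> \<psi>)
  then show ?case by (meson deriv.andE1 deriv.andE2 sat.simps(3) rc_theory_And rc_theory_deriv)
next
  case (Dia a \<phi>)
  show ?case
  proof
    assume "sat canonical_model X (Dia a \<phi>)"
    then show "Dia a \<phi> \<in> X" using Dia.IH unfolding canonical_model_def by auto
  next
    assume "Dia a \<phi> \<in> X"
    with Dia.prems obtain Y where "rc_theory Y" "\<phi> \<in> Y" "(X, Y) \<in> rel canonical_model a"
      by (rule canonical_Dia_witness)
    then show "sat canonical_model X (Dia a \<phi>)"
      using Dia.IH by (auto simp: canonical_model_def)
  qed
qed

section \<open>Homomorphisms from canonical trees\<close>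

lemma tnodes_root: "[] \<in> tnodes A"
  by (induction A) (auto simp: tag_def image_iff)

lemma trel_edgeD:
  "(x, y) \<in> trel A c \<Longrightarrow> c \<in> mods A \<and> x \<in> tnodes A \<and> y \<in> tnodes A \<and> y \<noteq> []"
  by (induction A arbitrary: x y) (auto simp: tag_def tnodes_root split: if_splits)

lemma trel_unique_parent: "(u, y) \<in> trel A c \<Longrightarrow> (v, y) \<in> trel A d \<Longrightarrow> u = v"
proof (induction A arbitrary: u v y)
  case (And B C)
  then show ?case
    by (auto simp: tag_def split: if_splits dest: trel_edgeD) blast+
next
  case (Dia a B)
  then show ?case
    by (auto split: if_splits dest: trel_edgeD)
qed auto

definition tree_hom :: "'a fm \<Rightarrow> ('w, 'a) kmodel \<Rightarrow> (nat list \<Rightarrow> 'w) \<Rightarrow> bool" where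
  "tree_hom A N f \<longleftrightarrow> (\<forall>x\<in>tnodes A. f x \<in> worlds N) \<and>
     (\<forall>b x y. (x, y) \<in> trel A b \<longrightarrow> (f x, f y) \<in> rel N b) \<and>
     (\<forall>x p. x \<in> tnodes A \<longrightarrow> tval A x p \<longrightarrow> val N (f x) p)"

lemma tree_hom_worlds: "tree_hom A N f \<Longrightarrow> x \<in> tnodes A \<Longrightarrow> f x \<in> worlds N"
  unfolding tree_hom_def by blast

lemma tree_hom_rel: "tree_hom A N f \<Longrightarrow> (x, y) \<in> trel A b \<Longrightarrow> (f x, f y) \<in> rel N b"
  unfolding tree_hom_def by blast

lemma tree_hom_val: "tree_hom A N f \<Longrightarrow> x \<in> tnodes A \<Longrightarrow> tval A x p \<Longrightarrow> val N (f x) p"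
  unfolding tree_hom_def by blast

lemma tree_hom_comp:
  assumes "tree_hom A N f" and "\<And>x. x \<in> tnodes D \<Longrightarrow> g x \<in> tnodes A"
    and "\<And>b x y. (x, y) \<in> trel D b \<Longrightarrow> (g x, g y) \<in> trel A b"
    and "\<And>x p. x \<in> tnodes D \<Longrightarrow> tval D x p \<Longrightarrow> tval A (g x) p"
  shows "tree_hom D N (f \<circ> g)"
  using assms unfolding tree_hom_def by simp

lemma tree_hom_AndD:
  assumes "tree_hom (And B C) N f"
  shows "tree_hom B N (f \<circ> tag 0)" "tree_hom C N (f \<circ> tag 1)"
  by (rule tree_hom_comp[OF assms]; force)+

lemma tree_hom_DiaD:
  assumes "tree_hom (Dia a B) N f"
  shows "tree_hom B N (f \<circ> (#) 0)" "(f [], f [0]) \<in> rel N a"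
proof -
  show "tree_hom B N (f \<circ> (#) 0)"
    by (rule tree_hom_comp[OF assms]; force)
  show "(f [], f [0]) \<in> rel N a"
    using tree_hom_rel[OF assms, of "[]" "[0]" a] by simp
qed

lemma sat_root_tree_hom: "tree_hom A N f \<Longrightarrow> sat N (f []) A"
proof (induction A arbitrary: f)
  case (Var q)
  then show ?case by (simp add: tree_hom_def)
next
  case (And B C)
  then show ?case using tree_hom_AndD[OF And.prems] by (fastforce simp: tag_def)
next
  case (Dia a B)
  have "f [0] \<in> worlds N"
    using Dia.prems tnodes_root[of B] unfolding tree_hom_def by simp
  then show ?case using Dia.IH tree_hom_DiaD[OF Dia.prems] by fastforce
qed simp

lemma tree_hom_AndI:
  "tree_hom B N (f \<circ> tag 0) \<Longrightarrow> tree_hom C N (f \<circ> tag 1) \<Longrightarrow> tree_hom (And B C) N f"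
  unfolding tree_hom_def by auto

lemma tree_hom_DiaI:
  "tree_hom B N (f \<circ> (#) 0) \<Longrightarrow> f [] \<in> worlds N \<Longrightarrow> (f [], f [0]) \<in> rel N a \<Longrightarrow>
   tree_hom (Dia a B) N f"
  unfolding tree_hom_def by auto

lemma tree_hom_if_sat: "n \<in> worlds N \<Longrightarrow> sat N n A \<Longrightarrow> \<exists>f. f [] = n \<and> tree_hom A N f"
proof (induction A arbitrary: n)
  case (Var q)
  then show ?case by (intro exI[of _ "\<lambda>_. n"]) (simp add: tree_hom_def)
next
  case Top
  then show ?case by (intro exI[of _ "\<lambda>_. n"]) (simp add: tree_hom_def)
next
  case (And B C)
  then obtain g h where g: "g [] = n" "tree_hom B N g" and h: "h [] = n" "tree_hom C N h"
    by (meson sat.simps(3))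
  define f where "f x = (if x = [] then n else if hd x = 0 then g (tl x) else h (tl x))" for x
  have "f \<circ> tag 0 = g" "f \<circ> tag 1 = h"
    using g(1) h(1) by (auto simp: f_def tag_def)
  then have "tree_hom (And B C) N f"
    using g(2) h(2) by (intro tree_hom_AndI) simp_all
  moreover have "f [] = n" by (simp add: f_def)
  ultimately show ?case by blast
next
  case (Dia a B)
  then obtain m g where "(n, m) \<in> rel N a" "g [] = m" "tree_hom B N g"
    by (meson sat.simps(4))
  moreover define f where "f x = (if x = [] then n else g (tl x))" for x
  ultimately have "tree_hom (Dia a B) N f"
    using Dia.prems(1) by (intro tree_hom_DiaI) (simp_all add: f_def comp_def)
  moreover have "f [] = n" by (simp add: f_def)
  ultimately show ?case by blast
qed

lemma tree_hom_rc_closure: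
  assumes "rcw_model N" and "tree_hom A N f" and "(x, y) \<in> rc_closure S (trel A) b"
  shows "(f x, f y) \<in> rel N b"
  using rc_closure_hom[OF rc_frame_subset[OF rcw_model_frame[OF assms(1)]] _ assms(3)]
    tree_hom_rel[OF assms(2)] by blast

lemma sat_RCw_model_hom:
  assumes N: "rcw_model N" and f: "tree_hom A N f"
  shows "x \<in> tnodes A \<Longrightarrow> sat (RCw_model S A) x B \<Longrightarrow> sat N (f x) B"
proof (induction B arbitrary: x)
  case (Var p)
  then consider "tval A x p" | y where "y \<in> tnodes A" "(x, y) \<in> rc_closure S (trel A) \<infinity>" "tval A y p"
    by (auto simp: RCw_model_def)
  then show ?case
  proof cases
    case 1
    then show ?thesis using Var.prems tree_hom_val[OF f] by simp
  next
    case 2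
    then show ?thesis
      using N tree_hom_rc_closure[OF N f] tree_hom_worlds[OF f] tree_hom_val[OF f]
      unfolding rcw_model_def by fastforce
  qed
next
  case (Dia c B)
  then obtain y where "y \<in> tnodes A" "(x, y) \<in> rc_closure S (trel A) c" "sat (RCw_model S A) y B"
    by (auto simp: RCw_model_def)
  then show ?case
    using Dia.IH tree_hom_rc_closure[OF N f] tree_hom_worlds[OF f] by fastforce
qed simp_all

lemma deriv_complete:
  assumes "sat (RCw_model S A) [] B"
  shows "deriv A B"
proof -
  let ?X = "{\<chi>. deriv A \<chi>}"
  have X: "rc_theory ?X" by (rule rc_theory_consequences)
  then have "sat canonical_model ?X A"
    by (simp add: canonical_sat_iff deriv.ax)
  moreover have "?X \<in> worlds canonical_model"
    using X by (simp add: canonical_model_def)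
  ultimately obtain f where f: "f [] = ?X" "tree_hom A canonical_model f"
    using tree_hom_if_sat[of ?X canonical_model A] by auto
  have "sat canonical_model (f []) B"
    by (rule sat_RCw_model_hom[OF rcw_model_canonical f(2) tnodes_root assms])
  then show ?thesis
    using canonical_sat_iff[OF X] f(1) by simp
qed

section \<open>An explicit RC-closure of canonical trees\<close>

lemma rtrancl_unique_pred_comparable:
  assumes unique: "\<And>u v y. (u, y) \<in> E \<Longrightarrow> (v, y) \<in> E \<Longrightarrow> u = v" and "P \<subseteq> E" and "R \<subseteq> E"
  shows "(w1, y) \<in> P\<^sup>* \<Longrightarrow> (w2, y) \<in> R\<^sup>* \<Longrightarrow> (w1, w2) \<in> P\<^sup>* \<or> (w2, w1) \<in> R\<^sup>*"
proof (induction arbitrary: w2 rule: rtrancl_induct)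
  case (step u y)
  from step.prems show ?case
  proof (cases rule: rtranclE)
    case base
    then show ?thesis using step.hyps(1,2) by auto
  next
    case (step v)
    then have "v = u" using unique assms(2,3) \<open>(u, y) \<in> P\<close> by blast
    then show ?thesis using step.IH step(1) by blast
  qed
qed simp

definition tedges :: "'a fm \<Rightarrow> (enat \<Rightarrow> bool) \<Rightarrow> (nat list \<times> nat list) set" where
  "tedges A P = {(u, v). \<exists>c. P c \<and> (u, v) \<in> trel A c}"

definition tree_rc_rel :: "'a fm \<Rightarrow> enat \<Rightarrow> (nat list \<times> nat list) set" where
  "tree_rc_rel A b = {(x, y). \<exists>w. (w, x) \<in> (tedges A ((<) b))\<^sup>* \<and> (w, y) \<in> (tedges A ((\<le>) b))\<^sup>+}"

lemma tedges_mono: "(\<And>c. P c \<Longrightarrow> P' c) \<Longrightarrow> tedges A P \<subseteq> tedges A P'"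
  unfolding tedges_def by blast

lemma tedges_paths_comparable:
  "(w1, y) \<in> (tedges A P)\<^sup>* \<Longrightarrow> (w2, y) \<in> (tedges A P')\<^sup>* \<Longrightarrow>
   (w1, w2) \<in> (tedges A P)\<^sup>* \<or> (w2, w1) \<in> (tedges A P')\<^sup>*"
  by (rule rtrancl_unique_pred_comparable[of "tedges A (\<lambda>_. True)"])
    (auto simp: tedges_def intro: trel_unique_parent)

lemma tree_rc_relI:
  "(w, x) \<in> (tedges A ((<) b))\<^sup>* \<Longrightarrow> (w, y) \<in> (tedges A ((\<le>) b))\<^sup>+ \<Longrightarrow> (x, y) \<in> tree_rc_rel A b"
  unfolding tree_rc_rel_def by blast

lemma tree_rc_relE:
  assumes "(x, y) \<in> tree_rc_rel A b"
  obtains w where "(w, x) \<in> (tedges A ((<) b))\<^sup>*" "(w, y) \<in> (tedges A ((\<le>) b))\<^sup>+"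
  using assms unfolding tree_rc_rel_def by blast

lemma trel_subset_tree_rc_rel: "(x, y) \<in> trel A b \<Longrightarrow> (x, y) \<in> tree_rc_rel A b"
  unfolding tree_rc_rel_def tedges_def by blast

lemma tree_rc_rel_comp:
  assumes xy: "(x, y) \<in> tree_rc_rel A a" and yz: "(y, z) \<in> tree_rc_rel A b"
  shows "(x, z) \<in> tree_rc_rel A (min a b)"
proof -
  define m where "m = min a b"
  obtain w1 where h1: "(w1, x) \<in> (tedges A ((<) a))\<^sup>*" "(w1, y) \<in> (tedges A ((\<le>) a))\<^sup>+"
    using xy by (rule tree_rc_relE)
  obtain w2 where h2: "(w2, y) \<in> (tedges A ((<) b))\<^sup>*" "(w2, z) \<in> (tedges A ((\<le>) b))\<^sup>+"
    using yz by (rule tree_rc_relE)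
  have sub: "tedges A ((<) a) \<subseteq> tedges A ((<) m)" "tedges A ((<) b) \<subseteq> tedges A ((<) m)"
    "tedges A ((\<le>) a) \<subseteq> tedges A ((\<le>) m)" "tedges A ((\<le>) b) \<subseteq> tedges A ((\<le>) m)"
    by (auto simp: m_def min_less_iff_disj min_le_iff_disj intro!: tedges_mono)
  have x: "(w1, x) \<in> (tedges A ((<) m))\<^sup>*" using h1(1) rtrancl_mono[OF sub(1)] by blast
  have z: "(w2, z) \<in> (tedges A ((\<le>) m))\<^sup>+" using h2(2) trancl_mono sub(4) by blast
  from tedges_paths_comparable[OF trancl_into_rtrancl[OF h1(2)] h2(1)]
  have "(x, z) \<in> tree_rc_rel A m"
  proof
    assume "(w1, w2) \<in> (tedges A ((\<le>) a))\<^sup>*"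
    then have "(w1, w2) \<in> (tedges A ((\<le>) m))\<^sup>*" using rtrancl_mono[OF sub(3)] by blast
    then have "(w1, z) \<in> (tedges A ((\<le>) m))\<^sup>+" using z by (rule rtrancl_trancl_trancl)
    with x show ?thesis by (rule tree_rc_relI)
  next
    assume "(w2, w1) \<in> (tedges A ((<) b))\<^sup>*"
    then have "(w2, w1) \<in> (tedges A ((<) m))\<^sup>*" using rtrancl_mono[OF sub(2)] by blast
    then have "(w2, x) \<in> (tedges A ((<) m))\<^sup>*" using x by (rule rtrancl_trans)
    then show ?thesis using z by (rule tree_rc_relI)
  qed
  then show ?thesis by (simp add: m_def)
qed

lemma tree_rc_rel_eucl:
  assumes ab: "b < a" and xy: "(x, y) \<in> tree_rc_rel A a" and xz: "(x, z) \<in> tree_rc_rel A b"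
  shows "(y, z) \<in> tree_rc_rel A b"
proof -
  obtain w1 where h1: "(w1, x) \<in> (tedges A ((<) a))\<^sup>*" "(w1, y) \<in> (tedges A ((\<le>) a))\<^sup>+"
    using xy by (rule tree_rc_relE)
  obtain w2 where h2: "(w2, x) \<in> (tedges A ((<) b))\<^sup>*" "(w2, z) \<in> (tedges A ((\<le>) b))\<^sup>+"
    using xz by (rule tree_rc_relE)
  have sub: "tedges A ((\<le>) a) \<subseteq> tedges A ((<) b)" "tedges A ((<) a) \<subseteq> tedges A ((\<le>) b)"
    using ab by (auto intro!: tedges_mono)
  have y: "(w1, y) \<in> (tedges A ((<) b))\<^sup>*"
    using trancl_into_rtrancl[OF h1(2)] rtrancl_mono[OF sub(1)] by blast
  from tedges_paths_comparable[OF h1(1) h2(1)]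
  show ?thesis
  proof
    assume "(w1, w2) \<in> (tedges A ((<) a))\<^sup>*"
    then have "(w1, w2) \<in> (tedges A ((\<le>) b))\<^sup>*" using rtrancl_mono[OF sub(2)] by blast
    then have "(w1, z) \<in> (tedges A ((\<le>) b))\<^sup>+" using h2(2) by (rule rtrancl_trancl_trancl)
    with y show ?thesis by (rule tree_rc_relI)
  next
    assume "(w2, w1) \<in> (tedges A ((<) b))\<^sup>*"
    then have "(w2, y) \<in> (tedges A ((<) b))\<^sup>*" using y by (rule rtrancl_trans)
    then show ?thesis using h2(2) by (rule tree_rc_relI)
  qed
qed

lemma tree_rc_rel_incl:
  assumes ab: "b < a" and xy: "(x, y) \<in> tree_rc_rel A a"
  shows "(x, y) \<in> tree_rc_rel A b"
proof -
  have sub: "tedges A ((<) a) \<subseteq> tedges A ((<) b)" "tedges A ((\<le>) a) \<subseteq> tedges A ((\<le>) b)"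
    using ab by (auto intro!: tedges_mono)
  obtain w where "(w, x) \<in> (tedges A ((<) a))\<^sup>*" "(w, y) \<in> (tedges A ((\<le>) a))\<^sup>+"
    using xy by (rule tree_rc_relE)
  then have "(w, x) \<in> (tedges A ((<) b))\<^sup>*" "(w, y) \<in> (tedges A ((\<le>) b))\<^sup>+"
    using rtrancl_mono[OF sub(1)] trancl_mono[OF _ sub(2)] by blast+
  then show ?thesis by (rule tree_rc_relI)
qed

lemma rc_frame_tree_rc_rel: "rc_frame UNIV (tree_rc_rel A)"
  unfolding rc_frame_def
  by (intro conjI ballI allI impI subsetI)
    (auto intro: tree_rc_rel_comp tree_rc_rel_eucl tree_rc_rel_incl)

lemma rc_closure_subset_tree_rc_rel: "rc_closure S (trel A) b \<subseteq> tree_rc_rel A b"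
  by (rule rc_closure_least[OF rc_frame_subset[OF rc_frame_tree_rc_rel]])
    (auto intro: trel_subset_tree_rc_rel)

context
  fixes S and R :: "enat \<Rightarrow> (nat list \<times> nat list) set" and A :: "'a fm" and b
  assumes S: "mods A \<subseteq> S" and b: "b \<in> S"
    and frame: "rc_frame S R" and trel_sub: "\<And>c. c \<in> S \<Longrightarrow> trel A c \<subseteq> R c"
begin

lemma tedges_ge_in_frame:
  assumes "(u, v) \<in> tedges A ((\<le>) b)"
  shows "(u, v) \<in> R b"
proof -
  obtain c where c: "b \<le> c" "(u, v) \<in> trel A c"
    using assms unfolding tedges_def by blast
  then have "c \<in> S" using S trel_edgeD by blast
  then have "(u, v) \<in> R c" using trel_sub c(2) by blast
  then show ?thesis
    using rc_frame_incl[OF frame \<open>c \<in> S\<close> b] c(1) by (cases "b = c") auto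
qed

lemma tedges_ge_trancl_in_frame: "(u, v) \<in> (tedges A ((\<le>) b))\<^sup>+ \<Longrightarrow> (u, v) \<in> R b"
proof (induction rule: trancl_induct)
  case (base v)
  then show ?case by (rule tedges_ge_in_frame)
next
  case (step v w)
  then show ?case using rc_frame_comp[OF frame b b, of u v w] tedges_ge_in_frame by simp
qed

lemma tedges_gt_rtrancl_eucl: "(w, x) \<in> (tedges A ((<) b))\<^sup>* \<Longrightarrow> (w, y) \<in> R b \<Longrightarrow> (x, y) \<in> R b"
proof (induction arbitrary: y rule: converse_rtrancl_induct)
  case (step w u)
  then obtain c where "b < c" "(w, u) \<in> trel A c" "c \<in> S"
    using S trel_edgeD unfolding tedges_def by blast
  then have "(u, y) \<in> R b"
    using trel_sub rc_frame_eucl[OF frame _ b] step.prems by blast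
  then show ?case by (rule step.IH)
qed

lemma tree_rc_rel_subset_frame: "tree_rc_rel A b \<subseteq> R b"
  by (auto elim!: tree_rc_relE intro: tedges_gt_rtrancl_eucl tedges_ge_trancl_in_frame)

end

lemma rc_closure_eq_tree_rc_rel:
  assumes "mods A \<subseteq> S" and "b \<in> S"
  shows "rc_closure S (trel A) b = tree_rc_rel A b"
proof
  show "tree_rc_rel A b \<subseteq> rc_closure S (trel A) b"
    unfolding rc_closure_def using tree_rc_rel_subset_frame[OF assms] by blast
qed (rule rc_closure_subset_tree_rc_rel)

lemma tree_rc_rel_omega:
  assumes "(x, y) \<in> tree_rc_rel A \<infinity>"
  shows "\<infinity> \<in> mods A"
proof -
  obtain w where "(w, y) \<in> (tedges A ((\<le>) \<infinity>))\<^sup>+"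
    using assms by (rule tree_rc_relE)
  then obtain u v where "(u, v) \<in> tedges A ((\<le>) \<infinity>)"
    using tranclD by metis
  then obtain c where "\<infinity> \<le> c" "(u, v) \<in> trel A c"
    unfolding tedges_def by blast
  then show ?thesis using trel_edgeD by fastforce
qed

definition RCw_tree_model :: "enat set \<Rightarrow> 'a fm \<Rightarrow> (nat list, 'a) kmodel" where
  "RCw_tree_model S A = \<lparr>worlds = tnodes A, rel = tree_rc_rel A, val = val (RCw_model S A)\<rparr>"

lemma rcw_model_RCw_tree_model:
  assumes S: "mods A \<subseteq> S"
  shows "rcw_model (RCw_tree_model S A)"
  unfolding rcw_model_def
proof (intro conjI allI impI)
  show "rc_frame UNIV (rel (RCw_tree_model S A))"
    by (simp add: RCw_tree_model_def rc_frame_tree_rc_rel)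
next
  fix x y p
  assume xy: "(x, y) \<in> rel (RCw_tree_model S A) \<infinity>" and y: "y \<in> worlds (RCw_tree_model S A)"
    and p: "val (RCw_tree_model S A) y p"
  have xy': "(x, y) \<in> tree_rc_rel A \<infinity>" using xy by (simp add: RCw_tree_model_def)
  then have "\<infinity> \<in> S" using S tree_rc_rel_omega by blast
  then have eq: "rc_closure S (trel A) \<infinity> = tree_rc_rel A \<infinity>"
    by (rule rc_closure_eq_tree_rc_rel[OF S])
  from p have "tval A y p \<or> (\<exists>z\<in>tnodes A. (y, z) \<in> tree_rc_rel A \<infinity> \<and> tval A z p)"
    by (simp add: RCw_tree_model_def RCw_model_def eq)
  then have "\<exists>z\<in>tnodes A. (x, z) \<in> tree_rc_rel A \<infinity> \<and> tval A z p"
  proof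
    assume "tval A y p"
    then show ?thesis using xy' y by (auto simp: RCw_tree_model_def)
  next
    assume "\<exists>z\<in>tnodes A. (y, z) \<in> tree_rc_rel A \<infinity> \<and> tval A z p"
    then show ?thesis using tree_rc_rel_comp[OF xy', of _ \<infinity>] by auto
  qed
  then show "val (RCw_tree_model S A) x p"
    by (simp add: RCw_tree_model_def RCw_model_def eq)
qed

lemma sat_RCw_tree_model_iff:
  "mods A \<subseteq> S \<Longrightarrow> mods B \<subseteq> S \<Longrightarrow> sat (RCw_tree_model S A) x B \<longleftrightarrow> sat (RCw_model S A) x B"
proof (induction B arbitrary: x)
  case (Var p)
  then show ?case by (simp add: RCw_tree_model_def)
next
  case (Dia c B)
  then have "c \<in> S" by simp
  then have "rel (RCw_tree_model S A) c = rel (RCw_model S A) c"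
    using rc_closure_eq_tree_rc_rel[OF Dia.prems(1)]
    by (simp add: RCw_tree_model_def RCw_model_def)
  moreover have "worlds (RCw_tree_model S A) = worlds (RCw_model S A)"
    by (simp add: RCw_tree_model_def RCw_model_def)
  ultimately show ?case using Dia by simp
qed simp_all

lemma RCw_model_sound:
  assumes "deriv A B" and "mods A \<subseteq> S" and "mods B \<subseteq> S"
  shows "sat (RCw_model S A) [] B"
proof -
  have "tree_hom A (RCw_tree_model S A) id"
    by (simp add: tree_hom_def RCw_tree_model_def RCw_model_def trel_subset_tree_rc_rel)
  then have "sat (RCw_tree_model S A) [] A"
    using sat_root_tree_hom by force
  then have "sat (RCw_tree_model S A) [] B"
    by (rule deriv_sound[OF rcw_model_RCw_tree_model[OF assms(2)] assms(1)])
  then show ?thesis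
    using sat_RCw_tree_model_iff[OF assms(2,3)] by simp
qed

theorem theorem5p5:
  fixes A B :: "'a fm"
  shows "deriv A B \<longleftrightarrow> sat (RCw_model (mods A \<union> mods B) A) [] B"
proof
  show "deriv A B \<Longrightarrow> sat (RCw_model (mods A \<union> mods B) A) [] B"
    by (rule RCw_model_sound) auto
  show "sat (RCw_model (mods A \<union> mods B) A) [] B \<Longrightarrow> deriv A B"
    by (rule deriv_complete)
qed

end
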